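(* For all $G,H\subseteq A$ and every $\varphi\in\mathcal{L}_{CoRGAL}$, the formula $\langle[G]\rangle\varphi\rightarrow\langle[G\cup H]\rangle\varphi$ is valid.
   Context: Fix a finite set $A$ of agents and a countable set $P$ of propositional variables. The language $\mathcal{L}_{CoRGAL}$ is given by $\varphi ::= p \mid \neg\varphi \mid (\varphi\wedge\varphi) \mid K_a\varphi \mid [\varphi]\varphi \mid [G,\varphi]\varphi \mid [\langle G\rangle]\varphi$ with $p\in P$, $a\in A$, $G\subseteq A$. $\mathcal{L}_{EL}$ is the fragment built only from $p,\neg,\wedge,K_a$. Duals: $\langle\psi\rangle\varphi:=\neg[\psi]\neg\varphi$, $\langle[G]\rangle\varphi:=\neg[\langle G\rangle]\neg\varphi$. For $G\subseteq A$, $\mathcal{L}^G_{EL}$ is the set of formulas $\bigwedge_{i\in G}K_i\varphi_i$ with each $\varphi_i\in\mathcal{L}_{EL}$; $\psi_G,\chi_G$ range over $\mathcal{L}^G_{EL}$. Epistemic models $M=(W,\sim,V)$: $W\neq\emptyset$, each $\sim_a$ an equivalence relation, $V:P\to\mathcal{P}(W)$; $M^\varphi$ is the restriction of $M$ to $\{v:(M,v)\models\varphi\}$. Semantics: standard for $p,\neg,\wedge,K_a$; $(M,w)\models[\varphi]\psi$ iff $(M,w)\models\varphi$ implies $(M^\varphi,w)\models\psi$; $(M,w)\models[G,\chi]\varphi$ iff $(M,w)\models\chi$ and for all $\psi_G$, $(M,w)\models[\psi_G\wedge\chi]\varphi$; $(M,w)\models[\langle G\rangle]\varphi$ iff for every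 $\psi_G$ there is $\chi_{A\setminus G}$ with $(M,w)\models\psi_G\to\langle\psi_G\wedge\chi_{A\setminus G}\rangle\varphi$. Thus $(M,w)\models\langle[G]\rangle\varphi$ iff there is $\psi_G$ such that for all $\chi_{A\setminus G}$, $(M,w)\models\psi_G\wedge[\psi_G\wedge\chi_{A\setminus G}]\varphi$. A formula is valid if true at every pointed model. *)

theory Defs
  imports Main "HOL-Library.Countable"
begin

text \<open>Agents: a finite type 'a (the set A is UNIV). Propositional variables: a countable type 'p.\<close>

text \<open>Epistemic formulas (the fragment L_EL), used for the quantified announcements psi_G.\<close>
datatype ('a, 'p) efm =
    EAtom 'p
  | ENeg "('a, 'p) efm"
  | EConj "('a, 'p) efm" "('a, 'p) efm"
  | EK 'a "('a, 'p) efm"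

datatype ('a, 'p) fm =
    Atom 'p
  | Neg "('a, 'p) fm"
  | Conj "('a, 'p) fm" "('a, 'p) fm"
  | K 'a "('a, 'p) fm"
  | Ann "('a, 'p) fm" "('a, 'p) fm"
  | GAnn "'a set" "('a, 'p) fm" "('a, 'p) fm"
  | Coal "'a set" "('a, 'p) fm"

definition Imp :: "('a, 'p) fm \<Rightarrow> ('a, 'p) fm \<Rightarrow> ('a, 'p) fm" where
  "Imp a b = Neg (Conj a (Neg b))"

definition DCoal :: "'a set \<Rightarrow> ('a, 'p) fm \<Rightarrow> ('a, 'p) fm" where
  "DCoal G a = Neg (Coal G (Neg a))"

record ('a, 'p, 'w) model =
  W :: "'w set"
  R :: "'a \<Rightarrow> ('w \<times> 'w) set"
  V :: "'p \<Rightarrow> 'w set"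

definition is_model :: "('a, 'p, 'w) model \<Rightarrow> bool" where
  "is_model M \<longleftrightarrow> W M \<noteq> {} \<and> (\<forall>a. equiv (W M) (R M a)) \<and> (\<forall>p. V M p \<subseteq> W M)"

definition restrict :: "('a, 'p, 'w) model \<Rightarrow> 'w set \<Rightarrow> ('a, 'p, 'w) model" where
  "restrict M S = \<lparr> W = W M \<inter> S,
                    R = (\<lambda>a. R M a \<inter> ((W M \<inter> S) \<times> (W M \<inter> S))),
                    V = (\<lambda>p. V M p \<inter> S) \<rparr>"

primrec esat :: "('a, 'p) efm \<Rightarrow> ('a, 'p, 'w) model \<Rightarrow> 'w \<Rightarrow> bool" where
  "esat (EAtom p) M w = (w \<in> V M p)"
| "esat (ENeg a) M w = (\<not> esat a M w)"
| "esat (EConj a b) M w = (esat a M w \<and> esat b M w)"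
| "esat (EK i a) M w = (\<forall>v. (w, v) \<in> R M i \<longrightarrow> esat a M v)"

text \<open>Truth of psi_G = conj_{i in G} K_i (f i), where f picks the epistemic formulas.\<close>
definition gsat :: "'a set \<Rightarrow> ('a \<Rightarrow> ('a, 'p) efm) \<Rightarrow> ('a, 'p, 'w) model \<Rightarrow> 'w \<Rightarrow> bool" where
  "gsat G f M w \<longleftrightarrow> (\<forall>i\<in>G. esat (EK i (f i)) M w)"

primrec sat :: "('a::finite, 'p) fm \<Rightarrow> ('a, 'p, 'w) model \<Rightarrow> 'w \<Rightarrow> bool" where
  "sat (Atom p) M w = (w \<in> V M p)"
| "sat (Neg a) M w = (\<not> sat a M w)"
| "sat (Conj a b) M w = (sat a M w \<and> sat b M w)"
| "sat (K i a) M w = (\<forall>v. (w, v) \<in> R M i \<longrightarrow> sat a M v)"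
| "sat (Ann a b) M w =
     (sat a M w \<longrightarrow> sat b (restrict M {v. sat a M v}) w)"
| "sat (GAnn G c a) M w =
     (sat c M w \<and>
      (\<forall>f. (gsat G f M w \<and> sat c M w) \<longrightarrow>
            sat a (restrict M {v. gsat G f M v \<and> sat c M v}) w))"
| "sat (Coal G a) M w =
     (\<forall>f. \<exists>g. gsat G f M w \<longrightarrow>
        (gsat G f M w \<and> gsat (UNIV - G) g M w \<and>
         sat a (restrict M {v. gsat G f M v \<and> gsat (UNIV - G) g M v}) w))"

end

theory Submission
  imports Defs
begin

text \<open>Enlarging a coalition cannot hurt it: the new members announce a tautology, and
  the opponents' announcement restricted to the smaller opposition is matched by an
  announcement of the larger one in which the defectors also announce a tautology.
  Both changes leave the updated model unchanged.\<close>

definition ETrue :: "('a, 'p) efm" where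
  "ETrue = ENeg (EConj (EAtom undefined) (ENeg (EAtom undefined)))"

lemma esat_ETrue [simp]: "esat ETrue M v"
  by (simp add: ETrue_def)

lemma gsat_pad_ETrue:
  "gsat G (\<lambda>i. if i \<in> S then f i else ETrue) M v = gsat (G \<inter> S) f M v"
  by (auto simp: gsat_def)

lemma sat_DCoal_iff:
  "sat (DCoal G \<phi>) M w \<longleftrightarrow>
     (\<exists>f. gsat G f M w \<and>
        (\<forall>g. gsat (- G) g M w \<longrightarrow>
           sat \<phi> (restrict M {v. gsat G f M v \<and> gsat (- G) g M v}) w))"
  by (auto simp: DCoal_def Compl_eq_Diff_UNIV)

lemma sat_DCoal_mono:
  assumes "G \<subseteq> G'" and "sat (DCoal G \<phi>) M w"
  shows "sat (DCoal G' \<phi>) M w"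
proof -
  obtain f where f: "gsat G f M w"
    and strategy: "\<And>g. gsat (- G) g M w \<Longrightarrow>
                     sat \<phi> (restrict M {v. gsat G f M v \<and> gsat (- G) g M v}) w"
    using assms(2) by (auto simp: sat_DCoal_iff)
  define f' where "f' = (\<lambda>i. if i \<in> G then f i else ETrue)"
  have f'_eq: "gsat G' f' M v = gsat G f M v" for v
    using assms(1) by (simp add: f'_def gsat_pad_ETrue Int_absorb1)
  have "sat \<phi> (restrict M {v. gsat G' f' M v \<and> gsat (- G') g' M v}) w"
    if g': "gsat (- G') g' M w" for g'
  proof -
    define g where "g = (\<lambda>i. if i \<in> - G' then g' i else ETrue)"
    have g_eq: "gsat (- G) g M v = gsat (- G') g' M v" for v
      unfolding g_def gsat_pad_ETrue using assms(1) by (metis Compl_anti_mono Int_absorb1)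
    show ?thesis
      using strategy[of g] g' by (simp add: f'_eq g_eq)
  qed
  moreover have "gsat G' f' M w"
    using f by (simp add: f'_eq)
  ultimately show ?thesis
    unfolding sat_DCoal_iff by blast
qed

theorem mainTheorem4:
  fixes G H :: "('a::finite) set" and \<phi> :: "('a, 'p::countable) fm"
    and M :: "('a, 'p, 'w) model" and w :: 'w
  assumes "is_model M" and "w \<in> W M"
  shows "sat (Imp (DCoal G \<phi>) (DCoal (G \<union> H) \<phi>)) M w"
  using sat_DCoal_mono[of G "G \<union> H" \<phi> M w] by (auto simp: Imp_def)

end
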